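(* Let $\nu$ be a positive Borel measure on $\mathbb{C}$, finite on compact sets. The following three statements are pairwise equivalent: (b1) the balayage $\nu^{\mathrm{bal}}$ of $\nu$ from $\mathbb{C}^{\mathrm{up}}$ exists as a positive measure, i.e. $\nu^{\mathrm{bal}}(B)<+\infty$ for every bounded Borel set $B\subset\mathbb{C}$; (b2) for some bounded Borel set $B\subset\mathbb{R}$ of positive Lebesgue measure, $\int_{\mathbb{C}^{\mathrm{up}}}\omega(z,B)\,d\nu(z)<+\infty$; (b3) $\nu$ satisfies the Blaschke condition near infinity in $\mathbb{C}^{\mathrm{up}}$: $\int_{\mathbb{C}^{\mathrm{up}}\setminus D(r_0)}\operatorname{Im}\frac{1}{\bar z}\,d\nu(z)<+\infty$ for some $r_0>0$.
   Context: $\mathbb{C}^{\mathrm{up}}=\{\operatorname{Im}z>0\}$, $\mathbb{C}_{\overline{\mathrm{lw}}}=\{\operatorname{Im}z\le 0\}$, $D(r)$ the open disc of radius $r$ centred at $0$. For $z\in\mathbb{C}^{\mathrm{up}}$ and Borel $B\subset\mathbb{C}$ the harmonic measure is $\omega(z,B)=\frac1\pi\int_{B\cap\mathbb{R}}\frac{\operatorname{Im}z}{(t-\operatorname{Re}z)^2+(\operatorname{Im}z)^2}\,dt$. The balayage from $\mathbb{C}^{\mathrm{up}}$ is $\nu^{\mathrm{bal}}(B):=\int_{\mathbb{C}^{\mathrm{up}}}\omega(z,B)\,d\nu(z)+\nu(B\cap\mathbb{C}_{\overline{\mathrm{lw}}})$. *)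

theory Defs
  imports "HOL-Analysis.Analysis"
begin

definition upper_half :: "complex set" where
  "upper_half = {z. Im z > 0}"

definition closed_lower_half :: "complex set" where
  "closed_lower_half = {z. Im z \<le> 0}"

definition harm_measure :: "complex \<Rightarrow> complex set \<Rightarrow> ennreal" where
  "harm_measure z B =
     (\<integral>\<^sup>+ t \<in> {t::real. complex_of_real t \<in> B}.
        ennreal (Im z / (pi * ((t - Re z)\<^sup>2 + (Im z)\<^sup>2))) \<partial>lborel)"

definition balayage :: "complex measure \<Rightarrow> complex set \<Rightarrow> ennreal" where
  "balayage nu B =
     (\<integral>\<^sup>+ z \<in> upper_half. harm_measure z B \<partial>nu) + emeasure nu (B \<inter> closed_lower_half)"

end

theory Submission
  imports Defs
begin

text \<open>For a set \<open>B \<subseteq> [-R, R]\<close> and \<open>|z|\<close> large, the Poisson kernel \<open>Im z / (\<pi> |z - t|\<^sup>2)\<close>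
  is comparable, uniformly in \<open>t \<in> B\<close>, to \<open>Im z / (\<pi> |z|\<^sup>2) = Im (1 / z\<^sup>*) / \<pi>\<close>. Integrating
  over \<open>B\<close> gives \<open>\<omega>(z, B) \<le> (8R/\<pi>) Im (1 / z\<^sup>*)\<close> and \<open>\<omega>(z, B) \<ge> (|B|/4\<pi>) Im (1 / z\<^sup>*)\<close>, so the
  Blaschke integral near infinity and \<open>\<integral> \<omega>(z, B) d\<nu>\<close> are finite together as soon as \<open>|B| > 0\<close>.
  On the remaining bounded part \<open>\<omega> \<le> 1\<close>, and \<open>\<nu>\<close> is finite on compact sets.\<close>

lemma Im_inverse_cnj: "Im (1 / cnj z) = Im z / (cmod z)\<^sup>2"
  by (simp add: Im_divide cmod_power2)

definition poisson_kernel :: "complex \<Rightarrow> real \<Rightarrow> real" where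
  "poisson_kernel z t = Im z / (pi * ((t - Re z)\<^sup>2 + (Im z)\<^sup>2))"

lemma poisson_kernel_eq_norm: "poisson_kernel z t = Im z / (pi * (cmod (z - complex_of_real t))\<^sup>2)"
  by (simp add: poisson_kernel_def cmod_power2 power2_commute)

lemma borel_measurable_poisson_kernel [measurable]: "poisson_kernel z \<in> borel_measurable borel"
  unfolding poisson_kernel_def by measurable

lemma harm_measure_eq_poisson_kernel:
  "harm_measure z B = (\<integral>\<^sup>+t. ennreal (poisson_kernel z t) * indicator {t. complex_of_real t \<in> B} t \<partial>lborel)"
  by (simp add: harm_measure_def poisson_kernel_def)

lemma poisson_kernel_nonneg: "Im z > 0 \<Longrightarrow> poisson_kernel z t \<ge> 0"
  by (simp add: poisson_kernel_def)

lemma has_real_derivative_arctan_poisson: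
  assumes "Im z > 0"
  shows "((\<lambda>t. arctan ((t - Re z) / Im z) / pi) has_real_derivative poisson_kernel z t) (at t)"
proof -
  have "((\<lambda>t. arctan ((t - Re z) / Im z) / pi) has_real_derivative
          inverse (1 + ((t - Re z) / Im z)\<^sup>2) * (1 / Im z) / pi) (at t)"
    using assms by (auto intro!: derivative_eq_intros)
  moreover have "inverse (1 + ((t - Re z) / Im z)\<^sup>2) * (1 / Im z) / pi = poisson_kernel z t"
    using assms by (simp add: poisson_kernel_def field_simps power2_eq_square)
  ultimately show ?thesis by simp
qed

lemma arctan_diff_div_pi_le_1: "arctan x / pi - arctan y / pi \<le> 1"
proof -
  have "arctan x - arctan y < pi"
    using arctan_bounded[of x] arctan_bounded[of y] by linarith
  then show ?thesis by (simp add: diff_divide_distrib[symmetric])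
qed

lemma nn_integral_poisson_kernel_Icc_le_1:
  assumes "Im z > 0"
  shows "(\<integral>\<^sup>+t. ennreal (poisson_kernel z t) * indicator {a..b} t \<partial>lborel) \<le> 1"
proof (cases "a \<le> b")
  case True
  let ?F = "\<lambda>t. arctan ((t - Re z) / Im z) / pi"
  have "(\<integral>\<^sup>+t. ennreal (poisson_kernel z t) * indicator {a..b} t \<partial>lborel) = ?F b - ?F a"
  proof (rule nn_integral_FTC_Icc)
    show "(?F has_real_derivative poisson_kernel z t) (at t)" for t
      using assms by (rule has_real_derivative_arctan_poisson)
  qed (use True assms poisson_kernel_nonneg in auto)
  also have "?F b - ?F a \<le> 1"
    by (rule arctan_diff_div_pi_le_1)
  finally show ?thesis by (metis ennreal_1 ennreal_leI)
qed simp

lemma nn_integral_poisson_kernel_le_1: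
  assumes "Im z > 0"
  shows "(\<integral>\<^sup>+t. ennreal (poisson_kernel z t) \<partial>lborel) \<le> 1"
proof -
  let ?f = "\<lambda>n t. ennreal (poisson_kernel z t) * indicator {- real n..real n} t"
  have sup: "(SUP n. ?f n t) = ennreal (poisson_kernel z t)" for t
  proof (rule antisym)
    show "(SUP n. ?f n t) \<le> ennreal (poisson_kernel z t)"
      by (rule SUP_least) (simp split: split_indicator)
    obtain n where "\<bar>t\<bar> \<le> real n"
      using real_arch_simple by blast
    then have "?f n t = ennreal (poisson_kernel z t)"
      by (simp add: abs_le_iff)
    then show "ennreal (poisson_kernel z t) \<le> (SUP n. ?f n t)"
      using SUP_upper[of n UNIV "\<lambda>n. ?f n t"] by simp
  qed
  have inc: "incseq ?f"
  proof (intro incseq_SucI le_funI)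
    show "?f n t \<le> ?f (Suc n) t" for n t
      by (intro mult_left_mono indicator_leI) auto
  qed
  have "(\<integral>\<^sup>+t. ennreal (poisson_kernel z t) \<partial>lborel) = (\<integral>\<^sup>+t. (SUP n. ?f n t) \<partial>lborel)"
    by (simp only: sup)
  also have "\<dots> = (SUP n. \<integral>\<^sup>+t. ?f n t \<partial>lborel)"
    by (rule nn_integral_monotone_convergence_SUP[OF inc]) measurable
  also have "\<dots> \<le> 1"
    using assms by (intro SUP_least nn_integral_poisson_kernel_Icc_le_1)
  finally show ?thesis .
qed

lemma harm_measure_le_1:
  assumes "Im z > 0"
  shows "harm_measure z B \<le> 1"
proof -
  have "harm_measure z B \<le> (\<integral>\<^sup>+t. ennreal (poisson_kernel z t) \<partial>lborel)"
    unfolding harm_measure_eq_poisson_kernel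
    by (intro nn_integral_mono) (simp split: split_indicator)
  also have "\<dots> \<le> 1" using assms by (rule nn_integral_poisson_kernel_le_1)
  finally show ?thesis .
qed

lemma poisson_kernel_le_far:
  assumes "Im z > 0" "\<bar>t\<bar> \<le> R" "2 * R \<le> cmod z"
  shows "poisson_kernel z t \<le> 4 * Im z / (pi * (cmod z)\<^sup>2)"
proof -
  have "cmod z / 2 \<le> cmod z - \<bar>t\<bar>"
    using assms by linarith
  also have "\<dots> \<le> cmod (z - complex_of_real t)"
    using norm_triangle_ineq2[of z "complex_of_real t"] by simp
  finally have "(cmod z / 2)\<^sup>2 \<le> (cmod (z - complex_of_real t))\<^sup>2"
    by (rule power_mono) simp
  moreover have "cmod z > 0"
    using assms(1) by auto
  ultimately have "Im z / (pi * (cmod (z - complex_of_real t))\<^sup>2) \<le> Im z / (pi * (cmod z / 2)\<^sup>2)"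
    using assms(1) by (intro divide_left_mono mult_left_mono mult_pos_pos) auto
  then show ?thesis
    by (simp add: poisson_kernel_eq_norm power_divide mult.commute)
qed

lemma poisson_kernel_ge_near:
  assumes "Im z > 0" "\<bar>t\<bar> \<le> cmod z"
  shows "Im z / (4 * pi * (cmod z)\<^sup>2) \<le> poisson_kernel z t"
proof -
  have "cmod (z - complex_of_real t) \<le> cmod z + \<bar>t\<bar>"
    using norm_triangle_ineq4[of z "complex_of_real t"] by simp
  also have "\<dots> \<le> 2 * cmod z"
    using assms(2) by linarith
  finally have "(cmod (z - complex_of_real t))\<^sup>2 \<le> (2 * cmod z)\<^sup>2"
    by (rule power_mono) simp
  moreover have "cmod (z - complex_of_real t) > 0"
    using assms(1) by (auto simp: complex_eq_iff)
  ultimately have "Im z / (pi * (2 * cmod z)\<^sup>2) \<le> Im z / (pi * (cmod (z - complex_of_real t))\<^sup>2)"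
    using assms(1) by (intro divide_left_mono mult_left_mono mult_pos_pos) auto
  then show ?thesis
    by (simp add: poisson_kernel_eq_norm power_mult_distrib)
qed

lemma harm_measure_le_Im_inverse_cnj:
  assumes "Im z > 0" "\<And>t. complex_of_real t \<in> B \<Longrightarrow> \<bar>t\<bar> \<le> R" "R \<ge> 0" "2 * R \<le> cmod z"
  shows "harm_measure z B \<le> ennreal (8 * R / pi) * ennreal (Im (1 / cnj z))"
proof -
  let ?c = "4 * Im z / (pi * (cmod z)\<^sup>2)"
  have "harm_measure z B \<le> (\<integral>\<^sup>+t. ennreal ?c * indicator {-R..R} t \<partial>lborel)"
    unfolding harm_measure_eq_poisson_kernel using assms(1,4)
    by (intro nn_integral_mono)
       (auto split: split_indicator dest: assms(2) intro!: ennreal_leI poisson_kernel_le_far)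
  also have "\<dots> = ennreal ?c * ennreal (2 * R)"
    using assms(3) by (simp add: nn_integral_cmult_indicator)
  also have "\<dots> = ennreal (8 * R / pi) * ennreal (Im (1 / cnj z))"
    using assms(1,3) by (simp add: Im_inverse_cnj ennreal_mult[symmetric])
  finally show ?thesis .
qed

lemma Im_inverse_cnj_le_harm_measure:
  assumes "Im z > 0" "S \<in> sets borel" "\<And>t. t \<in> S \<Longrightarrow> \<bar>t\<bar> \<le> R" "R \<le> cmod z"
  shows "emeasure lborel S * ennreal (1 / (4 * pi)) * ennreal (Im (1 / cnj z))
           \<le> harm_measure z (complex_of_real ` S)"
proof -
  let ?c = "Im z / (4 * pi * (cmod z)\<^sup>2)"
  have "ennreal (1 / (4 * pi)) * ennreal (Im (1 / cnj z)) = ennreal ?c"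
    using assms(1) by (simp add: Im_inverse_cnj ennreal_mult[symmetric])
  then have "emeasure lborel S * ennreal (1 / (4 * pi)) * ennreal (Im (1 / cnj z))
               = ennreal ?c * emeasure lborel S"
    by (metis mult.assoc mult.commute)
  also have "\<dots> = (\<integral>\<^sup>+t. ennreal ?c * indicator S t \<partial>lborel)"
    using assms(2) by (simp add: nn_integral_cmult_indicator)
  also have "\<dots> \<le> harm_measure z (complex_of_real ` S)"
    unfolding harm_measure_eq_poisson_kernel using assms(1,4)
    by (intro nn_integral_mono)
       (auto split: split_indicator dest!: assms(3) intro!: ennreal_leI poisson_kernel_ge_near)
  finally show ?thesis .
qed

lemma upper_half_in_borel: "upper_half \<in> sets borel"
  unfolding upper_half_def by (intro borel_open open_halfspace_Im_gt)

lemma borel_measurable_Im_inverse_cnj_indicator: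
  assumes "sets nu = sets borel" "A \<in> sets borel"
  shows "(\<lambda>z. ennreal (Im (1 / cnj z)) * indicator A z) \<in> borel_measurable nu"
  unfolding measurable_cong_sets[OF assms(1) refl] Im_inverse_cnj using assms(2) by measurable

lemma nn_integral_Im_inverse_cnj_le_harm_measure:
  assumes sets_nu: "sets nu = sets borel"
    and S: "S \<in> sets borel" "\<And>t. t \<in> S \<Longrightarrow> \<bar>t\<bar> \<le> R"
  shows "emeasure lborel S * ennreal (1 / (4 * pi))
           * (\<integral>\<^sup>+ z \<in> upper_half - ball 0 R. ennreal (Im (1 / cnj z)) \<partial>nu)
         \<le> (\<integral>\<^sup>+ z \<in> upper_half. harm_measure z (complex_of_real ` S) \<partial>nu)"
proof -
  have "emeasure lborel S * ennreal (1 / (4 * pi))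
          * (\<integral>\<^sup>+ z \<in> upper_half - ball 0 R. ennreal (Im (1 / cnj z)) \<partial>nu)
        = (\<integral>\<^sup>+ z. emeasure lborel S * ennreal (1 / (4 * pi))
             * (ennreal (Im (1 / cnj z)) * indicator (upper_half - ball 0 R) z) \<partial>nu)"
    using sets_nu upper_half_in_borel
    by (intro nn_integral_cmult[symmetric] borel_measurable_Im_inverse_cnj_indicator) auto
  also have "\<dots> \<le> (\<integral>\<^sup>+ z \<in> upper_half. harm_measure z (complex_of_real ` S) \<partial>nu)"
    using S by (intro nn_integral_mono)
      (auto split: split_indicator simp: upper_half_def intro!: Im_inverse_cnj_le_harm_measure)
  finally show ?thesis .
qed

lemma nn_integral_harm_measure_le_Im_inverse_cnj:
  assumes sets_nu: "sets nu = sets borel"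
    and B: "\<And>t. complex_of_real t \<in> B \<Longrightarrow> \<bar>t\<bar> \<le> R" "R \<ge> 0"
  shows "(\<integral>\<^sup>+ z \<in> upper_half. harm_measure z B \<partial>nu)
         \<le> emeasure nu (cball 0 (max r (2 * R)))
           + ennreal (8 * R / pi) * (\<integral>\<^sup>+ z \<in> upper_half - ball 0 r. ennreal (Im (1 / cnj z)) \<partial>nu)"
proof -
  let ?g = "\<lambda>z. ennreal (Im (1 / cnj z)) * indicator (upper_half - ball 0 r) z"
  have g: "?g \<in> borel_measurable nu"
    using sets_nu upper_half_in_borel by (intro borel_measurable_Im_inverse_cnj_indicator) auto
  have cball: "cball 0 (max r (2 * R)) \<in> sets nu"
    using sets_nu by simp
  have "harm_measure z B * indicator upper_half z
        \<le> indicator (cball 0 (max r (2 * R))) z + ennreal (8 * R / pi) * ?g z" for z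
  proof (cases "z \<in> upper_half")
    case True
    then have z: "Im z > 0"
      by (simp add: upper_half_def)
    show ?thesis
    proof (cases "cmod z \<le> max r (2 * R)")
      case True
      then show ?thesis
        using harm_measure_le_1[OF z] \<open>z \<in> upper_half\<close> by (simp add: add_increasing2)
    next
      case False
      then show ?thesis
        using harm_measure_le_Im_inverse_cnj[OF z B] \<open>z \<in> upper_half\<close> by (simp add: add_increasing)
    qed
  qed simp
  then have "(\<integral>\<^sup>+ z \<in> upper_half. harm_measure z B \<partial>nu)
        \<le> (\<integral>\<^sup>+ z. indicator (cball 0 (max r (2 * R))) z + ennreal (8 * R / pi) * ?g z \<partial>nu)"
    by (rule nn_integral_mono)
  also have "\<dots> = emeasure nu (cball 0 (max r (2 * R))) + ennreal (8 * R / pi) * (\<integral>\<^sup>+ z. ?g z \<partial>nu)"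
    using g cball by (simp add: nn_integral_add nn_integral_cmult)
  finally show ?thesis .
qed

lemma balayage_less_top_if_Blaschke:
  assumes sets_nu: "sets nu = sets borel"
    and loc_fin: "\<And>K. compact K \<Longrightarrow> emeasure nu K < \<infinity>"
    and "bounded B"
    and Blaschke: "(\<integral>\<^sup>+ z \<in> upper_half - ball 0 r. ennreal (Im (1 / cnj z)) \<partial>nu) < \<infinity>"
  shows "balayage nu B < \<infinity>"
proof -
  obtain R where R: "R > 0" "\<And>z. z \<in> B \<Longrightarrow> cmod z \<le> R"
    using \<open>bounded B\<close> by (auto simp: bounded_pos)
  have "(\<integral>\<^sup>+ z \<in> upper_half. harm_measure z B \<partial>nu)
        \<le> emeasure nu (cball 0 (max r (2 * R)))
          + ennreal (8 * R / pi) * (\<integral>\<^sup>+ z \<in> upper_half - ball 0 r. ennreal (Im (1 / cnj z)) \<partial>nu)"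
    using R by (intro nn_integral_harm_measure_le_Im_inverse_cnj sets_nu) force+
  also have "\<dots> < \<infinity>"
    using loc_fin[of "cball 0 (max r (2 * R))"] Blaschke by (simp add: ennreal_mult_less_top)
  finally have "(\<integral>\<^sup>+ z \<in> upper_half. harm_measure z B \<partial>nu) < \<infinity>" .
  moreover have "emeasure nu (B \<inter> closed_lower_half) \<le> emeasure nu (cball 0 R)"
    using R sets_nu by (intro emeasure_mono) auto
  moreover have "emeasure nu (cball 0 R) < \<infinity>"
    by (intro loc_fin compact_cball)
  ultimately show ?thesis
    by (simp add: balayage_def)
qed

theorem corollary1:
  fixes nu :: "complex measure"
  assumes sets_nu: "sets nu = sets borel"
    and loc_fin: "\<And>K. compact K \<Longrightarrow> emeasure nu K < \<infinity>"
  defines "b1 \<equiv> (\<forall>B \<in> sets borel. bounded B \<longrightarrow> balayage nu B < \<infinity>)"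
    and "b2 \<equiv> (\<exists>B :: real set. B \<in> sets borel \<and> bounded B \<and> emeasure lborel B > 0 \<and>
                 (\<integral>\<^sup>+ z \<in> upper_half. harm_measure z (complex_of_real ` B) \<partial>nu) < \<infinity>)"
    and "b3 \<equiv> (\<exists>r0 > 0. (\<integral>\<^sup>+ z \<in> upper_half - ball 0 r0.
                 ennreal (Im (1 / cnj z)) \<partial>nu) < \<infinity>)"
  shows "(b1 \<longleftrightarrow> b2) \<and> (b2 \<longleftrightarrow> b3) \<and> (b1 \<longleftrightarrow> b3)"
proof -
  have "b2" if "b1"
  proof -
    have "compact (complex_of_real ` {0..1})"
      by (intro compact_continuous_image continuous_intros compact_Icc)
    then have "balayage nu (complex_of_real ` {0..1}) < \<infinity>"
      using \<open>b1\<close> by (simp add: b1_def borel_compact compact_imp_bounded)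
    then show "b2"
      unfolding b2_def balayage_def by (intro exI[of _ "{0..1}"]) auto
  qed
  moreover have "b3" if "b2"
  proof -
    obtain S R where S: "S \<in> sets borel" "emeasure lborel S > 0" "R > 0" "\<And>t. t \<in> S \<Longrightarrow> \<bar>t\<bar> \<le> R"
      and harm_fin: "(\<integral>\<^sup>+ z \<in> upper_half. harm_measure z (complex_of_real ` S) \<partial>nu) < \<infinity>"
      using \<open>b2\<close> unfolding b2_def bounded_pos by auto
    have "emeasure lborel S * ennreal (1 / (4 * pi))
            * (\<integral>\<^sup>+ z \<in> upper_half - ball 0 R. ennreal (Im (1 / cnj z)) \<partial>nu)
          \<le> (\<integral>\<^sup>+ z \<in> upper_half. harm_measure z (complex_of_real ` S) \<partial>nu)"
      using sets_nu S(1,4) by (rule nn_integral_Im_inverse_cnj_le_harm_measure)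
    also have "\<dots> < \<infinity>"
      by (rule harm_fin)
    finally show "b3"
      unfolding b3_def using S(2,3) by (auto simp: ennreal_mult_less_top)
  qed
  moreover have "b1" if "b3"
    using \<open>b3\<close> balayage_less_top_if_Blaschke[OF sets_nu loc_fin] by (auto simp: b1_def b3_def)
  ultimately show ?thesis
    by blast
qed

end
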